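(* For any stationary process over a finite alphabet and every $L\ge2$, $$\mathbf{E}'(L)\le\mathbf{E}(L)\le\mathbf{E}.$$
   Context: $H(L)$ is the Shannon entropy (base 2) of $S_1\cdots S_L$, $H(0)=0$; $h_\mu(L)=H(L)-H(L-1)$; $h_\mu=\lim H(L)/L$; $\mathbf{E}=\sum_{L=1}^\infty[h_\mu(L)-h_\mu]$. Finite-$L$ estimates: $\mathbf{E}(L)=H(L)-L\,h_\mu(L)$; for even $L$, $\mathbf{E}'(L)=I[S_1\cdots S_{L/2};\,S_{L/2+1}\cdots S_L]$ (mutual information between the two halves of an $L$-block), and for odd $L$, $\mathbf{E}'(L)=\mathbf{E}'(L-1)$. *)

theory Defs
  imports "HOL-Probability.Probability"
begin

text \<open>A discrete-time process over the alphabet 's is a family X :: nat => 'a => 's of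
random variables on a probability space M; position i (0-based) corresponds to S_(i+1).\<close>

definition block_prob :: "'a measure \<Rightarrow> (nat \<Rightarrow> 'a \<Rightarrow> 's) \<Rightarrow> nat \<Rightarrow> 's list \<Rightarrow> real" where
  "block_prob M X k w = measure M {\<omega> \<in> space M. \<forall>i<length w. X (k + i) \<omega> = w ! i}"

definition stationary_process :: "'a measure \<Rightarrow> (nat \<Rightarrow> 'a \<Rightarrow> 's) \<Rightarrow> bool" where
  "stationary_process M X \<longleftrightarrow> (\<forall>k w. block_prob M X k w = block_prob M X 0 w)"

definition plogp :: "real \<Rightarrow> real" where
  "plogp p = (if p = 0 then 0 else p * log 2 p)"

definition block_entropy :: "'a measure \<Rightarrow> (nat \<Rightarrow> 'a \<Rightarrow> 's) \<Rightarrow> nat \<Rightarrow> real" where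
  "block_entropy M X L = - (\<Sum>w\<in>{w::'s list. length w = L}. plogp (block_prob M X 0 w))"

definition entropy_gain :: "'a measure \<Rightarrow> (nat \<Rightarrow> 'a \<Rightarrow> 's) \<Rightarrow> nat \<Rightarrow> real" where
  "entropy_gain M X L = block_entropy M X L - block_entropy M X (L - 1)"

definition entropy_rate :: "'a measure \<Rightarrow> (nat \<Rightarrow> 'a \<Rightarrow> 's) \<Rightarrow> real" where
  "entropy_rate M X = lim (\<lambda>L. block_entropy M X L / real L)"

definition excess_entropy :: "'a measure \<Rightarrow> (nat \<Rightarrow> 'a \<Rightarrow> 's) \<Rightarrow> ereal" where
  "excess_entropy M X = (\<Sum>n. ereal (entropy_gain M X (Suc n) - entropy_rate M X))"

definition excess_entropy_est :: "'a measure \<Rightarrow> (nat \<Rightarrow> 'a \<Rightarrow> 's) \<Rightarrow> nat \<Rightarrow> real" where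
  "excess_entropy_est M X L = block_entropy M X L - real L * entropy_gain M X L"

definition halves_mutual_info :: "'a measure \<Rightarrow> (nat \<Rightarrow> 'a \<Rightarrow> 's) \<Rightarrow> nat \<Rightarrow> real" where
  "halves_mutual_info M X m =
     (\<Sum>u\<in>{u::'s list. length u = m}. \<Sum>v\<in>{v::'s list. length v = m}.
        (let puv = block_prob M X 0 (u @ v) in
         if puv = 0 then 0
         else puv * log 2 (puv / (block_prob M X 0 u * block_prob M X m v))))"

definition excess_entropy_est' :: "'a measure \<Rightarrow> (nat \<Rightarrow> 'a \<Rightarrow> 's) \<Rightarrow> nat \<Rightarrow> real" where
  "excess_entropy_est' M X L =
     (if even L then halves_mutual_info M X (L div 2) else halves_mutual_info M X ((L - 1) div 2))"

end

theory Submission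
  imports Defs
begin

(* Strong subadditivity of block entropies, H(i + n + j) + H(n) <= H(i + n) + H(n + j),
   is the nonnegativity of the conditional mutual information between the two ends of a
   block given its middle.  For i = j = 1 it says that H is concave, i.e. the entropy gain
   h(L) is nonincreasing.  Then H(2m) - H(m) >= m h(2m), so
   E'(2m) = 2 H(m) - H(2m) <= H(2m) - 2m h(2m) = E(2m), and E(L) is nondecreasing in L.
   On the other side, h_mu = lim H(L)/L lies below every h(L), so
   E(L) = sum_{n<L} (h(n+1) - h(L)) <= sum_{n<L} (h(n+1) - h_mu) <= E. *)

lemma plogp_eq_mult_log: "plogp p = p * log 2 p"
  by (simp add: plogp_def)

lemma plogp_nonpos: "0 \<le> p \<Longrightarrow> p \<le> 1 \<Longrightarrow> plogp p \<le> 0"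
  by (simp add: plogp_def mult_nonneg_nonpos)

lemma log_ratio_lower_bound:
  fixes q r :: real
  assumes "0 < q" and "0 < r"
  shows "(q - r) / ln 2 \<le> q * log 2 (q / r)"
proof -
  have "1 - r / q \<le> ln (q / r)"
    using ln_le_minus_one[of "r / q"] assms by (simp add: ln_div)
  then have "q - r \<le> q * ln (q / r)"
    using mult_left_mono[of _ _ q] assms by (simp add: field_simps)
  then show ?thesis by (simp add: log_def divide_right_mono)
qed

lemma finite_lists_length:
  "finite (UNIV :: 's set) \<Longrightarrow> finite {w :: 's list. length w = n}"
  using finite_lists_length_eq[of "UNIV :: 's set" n] by simp

lemma sum_lists_length_append:
  "(\<Sum>u\<in>{u :: 's list. length u = m}. \<Sum>v\<in>{v. length v = k}. f (u @ v))
     = (\<Sum>x\<in>{x. length x = m + k}. f x)"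
proof -
  let ?A = "{u :: 's list. length u = m} \<times> {v. length v = k}"
  have image: "{x :: 's list. length x = m + k} = (\<lambda>(u, v). u @ v) ` ?A"
    by (auto intro!: image_eqI[where x = "(take m x, drop m x)" for x])
  have inj: "inj_on (\<lambda>(u, v). u @ v) ?A"
    by (auto simp: inj_on_def)
  have "(\<Sum>x\<in>{x. length x = m + k}. f x) = (\<Sum>(u, v)\<in>?A. f (u @ v))"
    unfolding image sum.reindex[OF inj] by (simp add: comp_def case_prod_beta)
  then show ?thesis by (simp add: sum.cartesian_product)
qed

lemma sum_lists_length_one:
  "(\<Sum>x\<in>{x :: 's list. length x = Suc 0}. f x) = (\<Sum>c\<in>UNIV. f [c])"
proof -
  have "{x :: 's list. length x = Suc 0} = range (\<lambda>c. [c])"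
    by (auto simp: length_Suc_conv)
  then show ?thesis by (simp add: sum.reindex inj_on_def)
qed

section \<open>Concave entropy sequences\<close>

locale concave_sequence =
  fixes H :: "nat \<Rightarrow> real"
  assumes zero: "H 0 = 0"
    and nonneg: "0 \<le> H n"
    and concave: "H (Suc (Suc n)) + H n \<le> 2 * H (Suc n)"
begin

definition gain :: "nat \<Rightarrow> real" where
  "gain n = H n - H (n - 1)"

definition excess_est :: "nat \<Rightarrow> real" where
  "excess_est n = H n - real n * gain n"

definition rate :: real where
  "rate = lim (\<lambda>n. H n / real n)"

lemma gain_Suc: "gain (Suc n) = H (Suc n) - H n"
  by (simp add: gain_def)

lemma gain_antimono:
  assumes "1 \<le> j" and "j \<le> k"
  shows "gain k \<le> gain j"
proof -
  have "gain (Suc (Suc n)) \<le> gain (Suc n)" for n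
    using concave[of n] by (simp add: gain_Suc)
  then show ?thesis
    using lift_Suc_antimono_le[of "\<lambda>n. gain (Suc n)" "j - 1" "k - 1"] assms
    by (cases j; cases k) simp_all
qed

lemma H_diff_eq_sum_gain: "H (a + b) - H a = (\<Sum>i<b. gain (a + Suc i))"
  using sum_lessThan_telescope[of "\<lambda>i. H (a + i)" b] by (simp add: gain_Suc)

lemma H_diff_ge: "real b * gain (a + b) \<le> H (a + b) - H a"
proof -
  have "(\<Sum>i<b. gain (a + b)) \<le> (\<Sum>i<b. gain (a + Suc i))"
    by (intro sum_mono gain_antimono) auto
  then show ?thesis by (simp add: H_diff_eq_sum_gain)
qed

lemma H_diff_le:
  assumes "1 \<le> a"
  shows "H (a + b) - H a \<le> real b * gain a"
proof -
  have "(\<Sum>i<b. gain (a + Suc i)) \<le> (\<Sum>i<b. gain a)"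
    using assms by (intro sum_mono gain_antimono) auto
  then show ?thesis by (simp add: H_diff_eq_sum_gain)
qed

lemma excess_est_mono:
  assumes "1 \<le> n"
  shows "excess_est n \<le> excess_est (Suc n)"
proof -
  have "gain (Suc n) \<le> gain n"
    using assms by (intro gain_antimono) auto
  then have "real n * gain (Suc n) \<le> real n * gain n"
    by (rule mult_left_mono) simp
  then show ?thesis
    unfolding excess_est_def by (simp add: gain_Suc algebra_simps)
qed

lemma subadditivity_gap_le_excess_est: "2 * H m - H (2 * m) \<le> excess_est (2 * m)"
proof -
  have "real m * gain (2 * m) \<le> H (2 * m) - H m"
    using H_diff_ge[where a = m and b = m] by (simp only: mult_2)
  then show ?thesis
    unfolding excess_est_def by simp
qed

lemma subadditivity_gap_half_le_excess_est:
  assumes "2 \<le> L"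
  shows "2 * H (L div 2) - H (2 * (L div 2)) \<le> excess_est L"
proof (cases "even L")
  case False
  then have "L = Suc (2 * (L div 2))" by simp
  moreover have "1 \<le> 2 * (L div 2)" using assms by simp
  ultimately show ?thesis
    using subadditivity_gap_le_excess_est[of "L div 2"] excess_est_mono[of "2 * (L div 2)"]
    by simp
qed (use subadditivity_gap_le_excess_est[of "L div 2"] in simp)

lemma per_symbol_decseq: "decseq (\<lambda>n. H (Suc n) / real (Suc n))"
proof (rule decseq_SucI)
  fix n
  have "real (Suc (Suc n)) * gain (Suc (Suc n)) \<le> H (Suc (Suc n))"
    using H_diff_ge[where a = 0 and b = "Suc (Suc n)"] by (simp add: zero)
  then have "real (Suc n) * H (Suc (Suc n)) \<le> real (Suc (Suc n)) * H (Suc n)"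
    by (simp add: gain_Suc algebra_simps)
  then show "H (Suc (Suc n)) / real (Suc (Suc n)) \<le> H (Suc n) / real (Suc n)"
    by (simp add: field_simps del: of_nat_Suc)
qed

lemma per_symbol_tendsto_rate: "(\<lambda>n. H n / real n) \<longlonglongrightarrow> rate"
proof -
  have "\<forall>n. 0 \<le> H (Suc n) / real (Suc n)"
    using nonneg by simp
  then obtain r where "(\<lambda>n. H (Suc n) / real (Suc n)) \<longlonglongrightarrow> r"
    by (rule decseq_convergent[OF per_symbol_decseq])
  then have "(\<lambda>n. H n / real n) \<longlonglongrightarrow> r"
    by (rule LIMSEQ_imp_Suc)
  then show ?thesis
    unfolding rate_def by (simp add: limI)
qed

lemma rate_le_gain:
  assumes "1 \<le> k"
  shows "rate \<le> gain k"
proof (rule LIMSEQ_le[OF per_symbol_tendsto_rate])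
  show "(\<lambda>n. excess_est k / real n + gain k) \<longlonglongrightarrow> gain k"
    using tendsto_add[OF lim_const_over_n tendsto_const] by simp
  have "H n / real n \<le> excess_est k / real n + gain k" if "k < n" for n
  proof -
    have "H n \<le> excess_est k + real n * gain k"
      using H_diff_le[OF assms, of "n - k"] that by (simp add: excess_est_def algebra_simps)
    with that show ?thesis by (simp add: field_simps)
  qed
  then show "\<exists>N. \<forall>n\<ge>N. H n / real n \<le> excess_est k / real n + gain k"
    by (auto intro!: exI[of _ "Suc k"])
qed

lemma excess_est_eq_sum: "excess_est L = (\<Sum>n<L. gain (Suc n) - gain L)"
  using sum_lessThan_telescope[of H L]
  by (simp add: excess_est_def gain_Suc zero sum_subtractf)

lemma excess_est_le_suminf:
  assumes "1 \<le> L"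
  shows "ereal (excess_est L) \<le> (\<Sum>n. ereal (gain (Suc n) - rate))"
proof -
  have "excess_est L \<le> (\<Sum>n<L. gain (Suc n) - rate)"
    unfolding excess_est_eq_sum using rate_le_gain[OF assms] by (intro sum_mono) simp
  then have "ereal (excess_est L) \<le> (\<Sum>n<L. ereal (gain (Suc n) - rate))"
    by simp
  also have "\<dots> \<le> (\<Sum>n. ereal (gain (Suc n) - rate))"
    using rate_le_gain[of "Suc _"] by (intro suminf_upper) simp
  finally show ?thesis .
qed

end

section \<open>Entropy of a consistent family of word probabilities\<close>

(* P w is the probability of reading the word w at any fixed position: sum_snoc is
   consistency under extension to the right, and sum_Cons, extension to the left, is
   where stationarity enters. *)
locale block_distribution =
  fixes P :: "'s list \<Rightarrow> real"
  assumes finite_alphabet: "finite (UNIV :: 's set)"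
    and nonneg: "0 \<le> P w"
    and Nil: "P [] = 1"
    and sum_snoc: "(\<Sum>c\<in>UNIV. P (w @ [c])) = P w"
    and sum_Cons: "(\<Sum>a\<in>UNIV. P (a # w)) = P w"
begin

definition H :: "nat \<Rightarrow> real" where
  "H n = - (\<Sum>w\<in>{w :: 's list. length w = n}. plogp (P w))"

definition conditional_mutual_information :: "nat \<Rightarrow> nat \<Rightarrow> nat \<Rightarrow> real" where
  "conditional_mutual_information i n j =
     (\<Sum>u\<in>{u :: 's list. length u = i}. \<Sum>w\<in>{w. length w = n}. \<Sum>v\<in>{v. length v = j}.
        P (u @ w @ v) *
          (log 2 (P (u @ w @ v)) + log 2 (P w) - log 2 (P (u @ w)) - log 2 (P (w @ v))))"

lemma sum_append_right: "(\<Sum>v\<in>{v :: 's list. length v = k}. P (u @ v)) = P u"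
proof (induction k)
  case (Suc k)
  have "(\<Sum>v\<in>{v :: 's list. length v = Suc k}. P (u @ v))
      = (\<Sum>v\<in>{v :: 's list. length v = k}. \<Sum>c\<in>UNIV. P ((u @ v) @ [c]))"
    using sum_lists_length_append[where m = k and k = 1 and f = "\<lambda>v. P (u @ v)"]
    by (simp add: sum_lists_length_one)
  with Suc show ?case using sum_snoc[of "u @ _"] by simp
qed simp

lemma sum_append_left: "(\<Sum>u\<in>{u :: 's list. length u = k}. P (u @ v)) = P v"
proof (induction k)
  case (Suc k)
  have "(\<Sum>u\<in>{u :: 's list. length u = Suc k}. P (u @ v))
      = (\<Sum>u\<in>{u :: 's list. length u = k}. \<Sum>a\<in>UNIV. P (a # u @ v))"
    using sum_lists_length_append[where m = 1 and k = k and f = "\<lambda>u. P (u @ v)"]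
    by (simp add: sum_lists_length_one sum.swap[of _ UNIV])
  with Suc show ?case by (simp add: sum_Cons)
qed simp

lemma sum_append_both:
  "(\<Sum>u\<in>{u :: 's list. length u = i}. \<Sum>v\<in>{v. length v = j}. P (u @ w @ v)) = P w"
  using sum_append_right[of "_ @ w"] by (simp add: sum_append_left)

lemma append_le_left: "P (u @ v) \<le> P u"
  using member_le_sum[where i = v and f = "\<lambda>v. P (u @ v)" and A = "{v'. length v' = length v}"]
  by (simp add: sum_append_right nonneg finite_lists_length finite_alphabet)

lemma append_le_right: "P (u @ v) \<le> P v"
  using member_le_sum[where i = u and f = "\<lambda>u. P (u @ v)" and A = "{u'. length u' = length u}"]
  by (simp add: sum_append_left nonneg finite_lists_length finite_alphabet)

lemma le_one: "P w \<le> 1"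
  using append_le_right[of w "[]"] by (simp add: Nil)

lemma H_0: "H 0 = 0"
  by (simp add: H_def Nil plogp_def)

lemma H_nonneg: "0 \<le> H n"
  by (simp add: H_def sum_nonpos plogp_nonpos nonneg le_one)

lemma sum_append_plogp:
  "(\<Sum>u\<in>{u :: 's list. length u = m}. \<Sum>v\<in>{v. length v = k}. P (u @ v) * log 2 (P (u @ v)))
     = - H (m + k)"
  using sum_lists_length_append[where m = m and k = k and f = "\<lambda>x. P x * log 2 (P x)"]
  by (simp add: H_def plogp_eq_mult_log)

lemma sum_append_mult_log_left:
  "(\<Sum>u\<in>{u :: 's list. length u = m}. \<Sum>v\<in>{v. length v = k}. P (u @ v) * log 2 (P u))
     = - H m"
  by (simp add: H_def plogp_eq_mult_log sum_append_right flip: sum_distrib_right)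

lemma sum_append_mult_log_right:
  "(\<Sum>u\<in>{u :: 's list. length u = m}. \<Sum>v\<in>{v. length v = k}. P (u @ v) * log 2 (P v))
     = - H k"
  by (subst sum.swap) (simp add: H_def plogp_eq_mult_log sum_append_left flip: sum_distrib_right)

lemma conditional_mutual_information_eq:
  "conditional_mutual_information i n j = H (i + n) + H (n + j) - H (i + n + j) - H n"
proof -
  let ?U = "{u :: 's list. length u = i}" and ?W = "{w :: 's list. length w = n}"
    and ?V = "{v :: 's list. length v = j}"
  have joint: "(\<Sum>u\<in>?U. \<Sum>w\<in>?W. \<Sum>v\<in>?V. P (u @ w @ v) * log 2 (P (u @ w @ v)))
      = - H (i + n + j)"
    using sum_lists_length_append[where f = "\<lambda>y. P (u @ y) * log 2 (P (u @ y))" for u]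
    by (simp add: sum_append_plogp add.assoc)
  have middle: "(\<Sum>u\<in>?U. \<Sum>w\<in>?W. \<Sum>v\<in>?V. P (u @ w @ v) * log 2 (P w)) = - H n"
    by (subst sum.swap) (simp add: H_def plogp_eq_mult_log sum_append_both flip: sum_distrib_right)
  have left: "(\<Sum>u\<in>?U. \<Sum>w\<in>?W. \<Sum>v\<in>?V. P (u @ w @ v) * log 2 (P (u @ w))) = - H (i + n)"
    using sum_lists_length_append[where f = "\<lambda>x. \<Sum>v\<in>?V. P (x @ v) * log 2 (P x)"]
    by (simp add: sum_append_mult_log_left)
  have right: "(\<Sum>u\<in>?U. \<Sum>w\<in>?W. \<Sum>v\<in>?V. P (u @ w @ v) * log 2 (P (w @ v))) = - H (n + j)"
    using sum_lists_length_append[where f = "\<lambda>y. P (u @ y) * log 2 (P y)" for u]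
    by (simp add: sum_append_mult_log_right)
  show ?thesis
    unfolding conditional_mutual_information_def
    by (simp add: algebra_simps sum.distrib sum_subtractf joint middle left right)
qed

lemma conditional_mutual_information_nonneg: "0 \<le> conditional_mutual_information i n j"
proof -
  let ?U = "{u :: 's list. length u = i}" and ?W = "{w :: 's list. length w = n}"
    and ?V = "{v :: 's list. length v = j}"
  (* Gibbs' inequality against the product of the conditional marginals r, which has the
     same total mass as P on every middle word w. *)
  define r where "r u w v = P (u @ w) * P (w @ v) / P w" for u w v
  have gibbs: "(P (u @ w @ v) - r u w v) / ln 2
      \<le> P (u @ w @ v) *
          (log 2 (P (u @ w @ v)) + log 2 (P w) - log 2 (P (u @ w)) - log 2 (P (w @ v)))"
    for u w v
  proof (cases "P (u @ w @ v) = 0")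
    case True
    then show ?thesis by (simp add: r_def nonneg divide_nonpos_pos)
  next
    case False
    then have q: "0 < P (u @ w @ v)" using nonneg[of "u @ w @ v"] by simp
    have uw: "0 < P (u @ w)" using q append_le_left[of "u @ w" v] by simp
    have wv: "0 < P (w @ v)" using q append_le_right[of u "w @ v"] by simp
    have w: "0 < P w" using uw append_le_right[of u w] by simp
    have "log 2 (P (u @ w @ v) / r u w v)
        = log 2 (P (u @ w @ v)) + log 2 (P w) - log 2 (P (u @ w)) - log 2 (P (w @ v))"
      using q uw wv w by (simp add: r_def log_divide log_mult)
    moreover have "0 < r u w v" using uw wv w by (simp add: r_def)
    ultimately show ?thesis using log_ratio_lower_bound[OF q, of "r u w v"] by simp
  qed
  have "(\<Sum>u\<in>?U. \<Sum>v\<in>?V. r u w v) = P w" for w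
  proof -
    have "(\<Sum>u\<in>?U. \<Sum>v\<in>?V. r u w v) = (\<Sum>u\<in>?U. P (u @ w)) * (\<Sum>v\<in>?V. P (w @ v)) / P w"
      by (simp add: r_def sum_product sum_divide_distrib)
    then show ?thesis by (simp add: sum_append_left sum_append_right)
  qed
  then have "(\<Sum>u\<in>?U. \<Sum>w\<in>?W. \<Sum>v\<in>?V. (P (u @ w @ v) - r u w v) / ln 2) = 0"
    by (subst sum.swap) (simp add: sum_subtractf sum_append_both flip: sum_divide_distrib)
  moreover have "(\<Sum>u\<in>?U. \<Sum>w\<in>?W. \<Sum>v\<in>?V. (P (u @ w @ v) - r u w v) / ln 2)
      \<le> conditional_mutual_information i n j"
    unfolding conditional_mutual_information_def by (intro sum_mono gibbs)
  ultimately show ?thesis by linarith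
qed

lemma H_strong_subadditive: "H (i + n + j) + H n \<le> H (i + n) + H (n + j)"
  using conditional_mutual_information_nonneg[of i n j]
  by (simp add: conditional_mutual_information_eq)

lemma mutual_information_eq:
  "(\<Sum>u\<in>{u :: 's list. length u = m}. \<Sum>v\<in>{v. length v = k}.
      (let puv = P (u @ v) in if puv = 0 then 0 else puv * log 2 (puv / (P u * P v))))
   = H m + H k - H (m + k)"
proof -
  have "(let puv = P (u @ v) in if puv = 0 then 0 else puv * log 2 (puv / (P u * P v)))
      = P (u @ v) * log 2 (P (u @ v)) - P (u @ v) * log 2 (P u) - P (u @ v) * log 2 (P v)"
    for u v
  proof (cases "P (u @ v) = 0")
    case False
    then have "0 < P (u @ v)" using nonneg[of "u @ v"] by simp
    moreover from this have "0 < P u" and "0 < P v"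
      using append_le_left[of u v] append_le_right[of u v] by simp_all
    ultimately show ?thesis by (simp add: Let_def log_divide log_mult algebra_simps)
  qed simp
  then show ?thesis
    by (simp add: sum_subtractf sum_append_plogp sum_append_mult_log_left
        sum_append_mult_log_right)
qed

end

sublocale block_distribution \<subseteq> entropy: concave_sequence H
proof
  show "H (Suc (Suc n)) + H n \<le> 2 * H (Suc n)" for n
    using H_strong_subadditive[of 1 n 1] by simp
qed (simp_all add: H_0 H_nonneg)

section \<open>Block probabilities of a stationary process\<close>

lemma finite_measure_eq_sum_fibres:
  fixes Y :: "'a \<Rightarrow> 'b"
  assumes "finite_measure M" and "finite (UNIV :: 'b set)"
    and "A \<in> sets M" and "Y \<in> measurable M (count_space UNIV)"
  shows "measure M A = (\<Sum>c\<in>UNIV. measure M {\<omega> \<in> A. Y \<omega> = c})"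
proof -
  interpret finite_measure M by fact
  have "{\<omega> \<in> A. Y \<omega> = c} \<in> sets M" for c
    using assms(3,4) sets.sets_into_space[OF assms(3)] by measurable
  moreover have "A = (\<Union>c. {\<omega> \<in> A. Y \<omega> = c})" by blast
  ultimately show ?thesis
    using finite_measure_finite_Union[OF assms(2), of "\<lambda>c. {\<omega> \<in> A. Y \<omega> = c}"]
    by (auto simp: disjoint_family_on_def)
qed

lemma block_event_sets:
  fixes X :: "nat \<Rightarrow> 'a \<Rightarrow> 's"
  assumes "\<And>i. X i \<in> measurable M (count_space UNIV)"
  shows "{\<omega> \<in> space M. \<forall>i<n. X (k + i) \<omega> = f i} \<in> sets M"
proof (rule sets.sets_Collect_countable_All)
  fix i
  have "{\<omega> \<in> space M. X (k + i) \<omega> = f i} \<in> sets M"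
    by (rule measurable_sets_Collect[OF assms]) simp
  then show "{\<omega> \<in> space M. i < n \<longrightarrow> X (k + i) \<omega> = f i} \<in> sets M"
    by (cases "i < n") simp_all
qed

context
  fixes M :: "'a measure" and X :: "nat \<Rightarrow> 'a \<Rightarrow> 's"
  assumes prob: "prob_space M" and finite_alphabet: "finite (UNIV :: 's set)"
    and meas: "\<And>i. X i \<in> measurable M (count_space UNIV)"
begin

lemma sum_block_prob_snoc: "(\<Sum>c\<in>UNIV. block_prob M X k (w @ [c])) = block_prob M X k w"
proof -
  let ?B = "{\<omega> \<in> space M. \<forall>i<length w. X (k + i) \<omega> = w ! i}"
  have "{\<omega> \<in> space M. \<forall>i<length (w @ [c]). X (k + i) \<omega> = (w @ [c]) ! i}
      = {\<omega> \<in> ?B. X (k + length w) \<omega> = c}" for c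
    by (auto simp: nth_append All_less_Suc)
  moreover have "measure M ?B = (\<Sum>c\<in>UNIV. measure M {\<omega> \<in> ?B. X (k + length w) \<omega> = c})"
    using prob_space.finite_measure[OF prob] finite_alphabet block_event_sets[OF meas] meas
    by (rule finite_measure_eq_sum_fibres)
  ultimately show ?thesis unfolding block_prob_def by simp
qed

lemma sum_block_prob_Cons:
  "(\<Sum>a\<in>UNIV. block_prob M X k (a # w)) = block_prob M X (Suc k) w"
proof -
  let ?B = "{\<omega> \<in> space M. \<forall>i<length w. X (Suc k + i) \<omega> = w ! i}"
  have "{\<omega> \<in> space M. \<forall>i<length (a # w). X (k + i) \<omega> = (a # w) ! i}
      = {\<omega> \<in> ?B. X k \<omega> = a}" for a
    by (auto simp: All_less_Suc2)
  moreover have "measure M ?B = (\<Sum>a\<in>UNIV. measure M {\<omega> \<in> ?B. X k \<omega> = a})"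
    using prob_space.finite_measure[OF prob] finite_alphabet block_event_sets[OF meas] meas
    by (rule finite_measure_eq_sum_fibres)
  ultimately show ?thesis unfolding block_prob_def by simp
qed

lemma block_distribution_block_prob:
  assumes "stationary_process M X"
  shows "block_distribution (block_prob M X 0)"
proof
  show "block_prob M X 0 [] = 1"
    using prob_space.prob_space[OF prob] by (simp add: block_prob_def)
  show "(\<Sum>c\<in>UNIV. block_prob M X 0 (w @ [c])) = block_prob M X 0 w" for w
    by (rule sum_block_prob_snoc)
  have "block_prob M X (Suc 0) w = block_prob M X 0 w" for w
    using assms unfolding stationary_process_def by blast
  then show "(\<Sum>a\<in>UNIV. block_prob M X 0 (a # w)) = block_prob M X 0 w" for w
    by (simp add: sum_block_prob_Cons)
qed (simp_all add: finite_alphabet block_prob_def)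

lemma halves_mutual_info_eq:
  assumes "stationary_process M X"
  shows "halves_mutual_info M X m = 2 * block_entropy M X m - block_entropy M X (2 * m)"
proof -
  interpret block_distribution "block_prob M X 0"
    using block_distribution_block_prob[OF assms] .
  have shift: "block_prob M X m v = block_prob M X 0 v" for v
    using assms unfolding stationary_process_def by blast
  have "halves_mutual_info M X m = H m + H m - H (m + m)"
    unfolding halves_mutual_info_def shift by (rule mutual_information_eq)
  then show ?thesis
    by (simp only: mult_2 H_def block_entropy_def)
qed

end

theorem lemma3:
  fixes M :: "'a measure" and X :: "nat \<Rightarrow> 'a \<Rightarrow> 's" and L :: nat
  assumes "prob_space M"
    and "finite (UNIV :: 's set)"
    and "\<And>i. X i \<in> measurable M (count_space UNIV)"
    and "stationary_process M X"
    and "L \<ge> 2"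
  shows "excess_entropy_est' M X L \<le> excess_entropy_est M X L
         \<and> ereal (excess_entropy_est M X L) \<le> excess_entropy M X"
proof -
  interpret block_distribution "block_prob M X 0"
    using block_distribution_block_prob[OF assms(1-4)] .
  have entropy: "block_entropy M X = H"
    by (simp add: fun_eq_iff block_entropy_def H_def)
  have "(L - 1) div 2 = L div 2" if "odd L"
    using that by (auto elim: oddE)
  then have est': "excess_entropy_est' M X L = 2 * H (L div 2) - H (2 * (L div 2))"
    by (simp add: excess_entropy_est'_def halves_mutual_info_eq[OF assms(1-4)] entropy)
  have est: "excess_entropy_est M X L = entropy.excess_est L"
    by (simp add: excess_entropy_est_def entropy.excess_est_def entropy_gain_def
        entropy.gain_def entropy)
  have excess: "excess_entropy M X = (\<Sum>n. ereal (entropy.gain (Suc n) - entropy.rate))"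
    by (simp add: excess_entropy_def entropy_gain_def entropy.gain_def entropy_rate_def
        entropy.rate_def entropy)
  show ?thesis
    using entropy.subadditivity_gap_half_le_excess_est[OF assms(5)]
      entropy.excess_est_le_suminf[of L] assms(5)
    by (simp add: est' est excess)
qed

end
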